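(* Let $|s_0\rangle=|0\rangle$, $|s_1\rangle=-\tfrac12|0\rangle-\tfrac{\sqrt3}{2}|1\rangle$, $|s_2\rangle=-\tfrac12|0\rangle+\tfrac{\sqrt3}{2}|1\rangle$ and $|\psi_i\rangle=|s_i\rangle\otimes|s_i\rangle$ for $i=0,1,2$, each with prior $1/3$. For unambiguous discrimination of this ensemble, the maximum conclusive success probability is $3/4$ over all POVMs, $1/2$ over separable POVMs, and $1/2$ over LOCC measurements (attained by an LOCC protocol).
   Context: An unambiguous-discrimination POVM for $\{|\psi_i\rangle\}_{i=0}^2$ is a POVM $\{\Pi_0,\Pi_1,\Pi_2,\Pi_?\}$ with $\langle\psi_j|\Pi_i|\psi_j\rangle=0$ for all $i\ne j$ in $\{0,1,2\}$; its conclusive success probability is $\tfrac13\sum_{i=0}^2\langle\psi_i|\Pi_i|\psi_i\rangle$. A POVM is separable if each of its elements is a nonnegative combination of product projectors $|a\rangle\langle a|\otimes|b\rangle\langle b|$. LOCC means measurements implementable by local operations on each qubit and classical communication. *)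

theory Defs
  imports Complex_Main
begin

text \<open>Computational basis of a qubit indexed by bool (False = |0>, True = |1>).
  Two-qubit vectors and operators are indexed by bool \<times> bool (first component = qubit A).\<close>

type_synonym qvec = "bool \<Rightarrow> complex"
type_synonym qop  = "bool \<Rightarrow> bool \<Rightarrow> complex"
type_synonym tvec = "bool \<times> bool \<Rightarrow> complex"
type_synonym top  = "bool \<times> bool \<Rightarrow> bool \<times> bool \<Rightarrow> complex"

definition mmul :: "('a::finite \<Rightarrow> 'a \<Rightarrow> complex) \<Rightarrow> ('a \<Rightarrow> 'a \<Rightarrow> complex) \<Rightarrow> ('a \<Rightarrow> 'a \<Rightarrow> complex)" where
  "mmul A B = (\<lambda>i k. \<Sum>j\<in>UNIV. A i j * B j k)"

definition adj :: "('a \<Rightarrow> 'b \<Rightarrow> complex) \<Rightarrow> ('b \<Rightarrow> 'a \<Rightarrow> complex)" where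
  "adj A = (\<lambda>i j. cnj (A j i))"

definition idm :: "'a \<Rightarrow> 'a \<Rightarrow> complex" where
  "idm = (\<lambda>i j. if i = j then 1 else 0)"

definition zop :: "'a \<Rightarrow> 'a \<Rightarrow> complex" where
  "zop = (\<lambda>i j. 0)"

definition outer :: "('a \<Rightarrow> complex) \<Rightarrow> ('a \<Rightarrow> complex) \<Rightarrow> ('a \<Rightarrow> 'a \<Rightarrow> complex)" where
  "outer u v = (\<lambda>i j. u i * cnj (v j))"

definition inner :: "('a::finite \<Rightarrow> complex) \<Rightarrow> ('a \<Rightarrow> complex) \<Rightarrow> complex" where
  "inner u v = (\<Sum>i\<in>UNIV. cnj (u i) * v i)"

definition expect :: "('a::finite \<Rightarrow> complex) \<Rightarrow> ('a \<Rightarrow> 'a \<Rightarrow> complex) \<Rightarrow> complex" where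
  "expect v A = (\<Sum>i\<in>UNIV. \<Sum>j\<in>UNIV. cnj (v i) * A i j * v j)"

definition psd :: "('a::finite \<Rightarrow> 'a \<Rightarrow> complex) \<Rightarrow> bool" where
  "psd A \<longleftrightarrow> (\<forall>v. Im (expect v A) = 0 \<and> 0 \<le> Re (expect v A))"

definition tens :: "qvec \<Rightarrow> qvec \<Rightarrow> tvec" where
  "tens a b = (\<lambda>ij. a (fst ij) * b (snd ij))"

definition kron :: "qop \<Rightarrow> qop \<Rightarrow> top" where
  "kron A B = (\<lambda>ij kl. A (fst ij) (fst kl) * B (snd ij) (snd kl))"

text \<open>Outcomes of the discrimination measurement: conclusive 0,1,2 and inconclusive ?.\<close>
datatype res = R0 | R1 | R2 | RQ

lemma UNIV_res: "(UNIV :: res set) = {R0, R1, R2, RQ}"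
  by (auto intro: res.exhaust)

instance res :: finite
  by standard (simp add: UNIV_res)

definition lab :: "nat \<Rightarrow> res" where
  "lab i = (if i = 0 then R0 else if i = 1 then R1 else if i = 2 then R2 else RQ)"

definition povm :: "('o::finite \<Rightarrow> top) \<Rightarrow> bool" where
  "povm E \<longleftrightarrow> (\<forall>x. psd (E x)) \<and> (\<forall>i j. (\<Sum>x\<in>UNIV. E x i j) = idm i j)"

definition s :: "nat \<Rightarrow> qvec" where
  "s i = (if i = 0 then (\<lambda>b. if b then 0 else 1)
          else if i = 1 then (\<lambda>b. if b then - complex_of_real (sqrt 3 / 2) else - 1/2)
          else (\<lambda>b. if b then complex_of_real (sqrt 3 / 2) else - 1/2))"

definition psi :: "nat \<Rightarrow> tvec" where
  "psi i = tens (s i) (s i)"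

definition ud_povm :: "(res \<Rightarrow> top) \<Rightarrow> bool" where
  "ud_povm E \<longleftrightarrow> povm E \<and>
     (\<forall>i<3. \<forall>j<3. i \<noteq> j \<longrightarrow> expect (psi j) (E (lab i)) = 0)"

definition succ_prob :: "(res \<Rightarrow> top) \<Rightarrow> real" where
  "succ_prob E = (1/3) * (\<Sum>i<3. Re (expect (psi i) (E (lab i))))"

definition sep_elem :: "top \<Rightarrow> bool" where
  "sep_elem E \<longleftrightarrow> (\<exists>(n::nat) (c::nat \<Rightarrow> real) a b.
     (\<forall>k<n. 0 \<le> c k \<and> inner (a k) (a k) = 1 \<and> inner (b k) (b k) = 1) \<and>
     E = (\<lambda>i j. \<Sum>k<n. complex_of_real (c k) * outer (tens (a k) (b k)) (tens (a k) (b k)) i j))"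

definition sep_povm :: "('o::finite \<Rightarrow> top) \<Rightarrow> bool" where
  "sep_povm E \<longleftrightarrow> povm E \<and> (\<forall>x. sep_elem (E x))"

text \<open>A protocol either stops and announces a fixed outcome x0, or one party (A or B)
  performs a local instrument with Kraus operators K_0..K_{m-1} (sum K_k^* K_k = I),
  announces k, and the parties continue with an LOCC protocol F k depending on k.\<close>
inductive locc :: "('o \<Rightarrow> top) \<Rightarrow> bool" where
  stop: "locc (\<lambda>x::'o. if x = x0 then idm else zop)"
| stepA: "\<lbrakk> \<forall>i j. (\<Sum>k<m. mmul (adj ((K::nat \<Rightarrow> qop) k)) (K k) i j) = idm i j;
           \<forall>k<m. locc ((F::nat \<Rightarrow> 'o \<Rightarrow> top) k) \<rbrakk> \<Longrightarrow>
         locc (\<lambda>x i j. \<Sum>k<m. mmul (adj (kron (K k) idm)) (mmul (F k x) (kron (K k) idm)) i j)"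
| stepB: "\<lbrakk> \<forall>i j. (\<Sum>k<m. mmul (adj ((K::nat \<Rightarrow> qop) k)) (K k) i j) = idm i j;
           \<forall>k<m. locc ((F::nat \<Rightarrow> 'o \<Rightarrow> top) k) \<rbrakk> \<Longrightarrow>
         locc (\<lambda>x i j. \<Sum>k<m. mmul (adj (kron idm (K k))) (mmul (F k x) (kron idm (K k))) i j)"

definition locc_povm :: "('o::finite \<Rightarrow> top) \<Rightarrow> bool" where
  "locc_povm E \<longleftrightarrow> povm E \<and> locc E"

end

theory Submission
  imports Defs
begin

text \<open>
  Unambiguity forces the element \<open>E\<^sub>i\<close> to annihilate \<open>\<psi>\<^sub>j\<close> for \<open>j \<noteq> i\<close>, so \<open>E\<^sub>i\<close> and
  \<open>E\<^sub>j\<close> see \<open>\<psi>\<^sub>i - \<psi>\<^sub>j\<close> exactly as they see \<open>\<psi>\<^sub>i\<close> and \<open>\<psi>\<^sub>j\<close>. Since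
  \<open>E\<^sub>i + E\<^sub>j \<le> I\<close>, the detection probabilities satisfy \<open>p\<^sub>i + p\<^sub>j \<le> \<parallel>\<psi>\<^sub>i - \<psi>\<^sub>j\<parallel>\<^sup>2 = 3/2\<close>,
  and summing over the three pairs gives \<open>3/4\<close>, which an explicit POVM attains.

  A separable element is a sum of product projectors \<open>|a b\<rangle>\<langle>a b|\<close>. If \<open>a \<otimes> b\<close> is orthogonal to
  \<open>\<psi>\<^sub>j\<close> and \<open>\<psi>\<^sub>k\<close>, then its overlap with \<open>\<psi>\<^sub>i\<close> is at most \<open>3/4\<close> of its overlap with the
  singlet \<open>|01\<rangle> - |10\<rangle>\<close>; hence \<open>p\<^sub>0 + p\<^sub>1 + p\<^sub>2 \<le> 3/4 \<cdot> \<parallel>singlet\<parallel>\<^sup>2 = 3/2\<close>. LOCC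
  measurements are separable, and \<open>1/2\<close> is attained when both parties measure the trine POVM
  \<open>{2/3 |t\<^sub>k\<rangle>\<langle>t\<^sub>k|}\<close> with \<open>t\<^sub>k \<bottom> s\<^sub>k\<close>: distinct outcomes \<open>k \<noteq> l\<close> exclude \<open>\<psi>\<^sub>k\<close> and \<open>\<psi>\<^sub>l\<close>.
\<close>

lemma sum_UNIV_bool: "(\<Sum>x\<in>UNIV. f x) = f False + f True"
  by (simp add: UNIV_bool)

lemma sum_UNIV_bool_pair:
  "(\<Sum>x\<in>UNIV. f x) = f (False, False) + f (False, True) + f (True, False) + f (True, True)"
proof -
  have UNIV_eq: "(UNIV :: (bool \<times> bool) set) = {(False, False), (False, True), (True, False), (True, True)}"
    by auto
  show ?thesis
    by (simp add: UNIV_eq add.assoc)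
qed

lemma sum_UNIV_res: "(\<Sum>x\<in>UNIV. f x) = f R0 + f R1 + f R2 + f RQ"
  by (simp add: UNIV_res add.assoc)

lemma sum_lessThan_3: "(\<Sum>i<(3::nat). f i) = f 0 + f 1 + (f 2 :: 'a::comm_monoid_add)"
  by (simp add: eval_nat_numeral add.assoc)

definition sesq :: "('a::finite \<Rightarrow> complex) \<Rightarrow> ('a \<Rightarrow> 'a \<Rightarrow> complex) \<Rightarrow> ('a \<Rightarrow> complex) \<Rightarrow> complex" where
  "sesq u A v = (\<Sum>i\<in>UNIV. \<Sum>j\<in>UNIV. cnj (u i) * A i j * v j)"

lemma expect_add_vector:
  "expect (\<lambda>i. u i + t * v i) A = expect u A + t * sesq u A v + cnj t * sesq v A u + t * cnj t * expect v A"
  by (simp add: expect_def sesq_def algebra_simps sum.distrib sum_distrib_left)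

lemma expect_outer: "expect v (outer u u) = inner v u * cnj (inner v u)"
  unfolding expect_def outer_def inner_def
  by (simp only: cnj_sum complex_cnj_mult complex_cnj_cnj sum_product) (simp add: mult_ac)

lemma expect_outer_norm: "expect v (outer u u) = complex_of_real ((cmod (inner v u))\<^sup>2)"
  unfolding expect_outer complex_norm_square ..

lemma expect_outer_eq_0_iff: "expect v (outer u u) = 0 \<longleftrightarrow> inner v u = 0"
  by (simp add: expect_outer)

lemma expect_add: "expect v (\<lambda>i j. A i j + B i j) = expect v A + expect v B"
  by (simp add: expect_def algebra_simps sum.distrib)

lemma expect_scale: "expect v (\<lambda>i j. c * A i j) = c * expect v A"
  by (simp add: expect_def algebra_simps sum_distrib_left)

lemma expect_sum: "expect v (\<lambda>i j. \<Sum>k\<in>K. F k i j) = (\<Sum>k\<in>K. expect v (F k))"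
proof -
  have "expect v (\<lambda>i j. \<Sum>k\<in>K. F k i j) = (\<Sum>i\<in>UNIV. \<Sum>j\<in>UNIV. \<Sum>k\<in>K. cnj (v i) * F k i j * v j)"
    unfolding expect_def by (simp add: sum_distrib_left sum_distrib_right)
  also have "\<dots> = (\<Sum>k\<in>K. expect v (F k))"
    unfolding expect_def by (subst sum.swap) (simp add: sum.swap[of _ UNIV K])
  finally show ?thesis .
qed

lemma expect_zop [simp]: "expect v zop = 0"
  by (simp add: expect_def zop_def)

lemma inner_tens: "inner (tens u v) (tens a b) = inner u a * inner v b"
  by (simp add: inner_def tens_def sum_UNIV_bool_pair sum_UNIV_bool algebra_simps)

definition scaled_outer :: "real \<Rightarrow> tvec \<Rightarrow> top" where
  "scaled_outer r u = (\<lambda>i j. complex_of_real r * outer u u i j)"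

lemma expect_scaled_outer: "expect v (scaled_outer r u) = complex_of_real r * (inner v u * cnj (inner v u))"
  by (simp add: scaled_outer_def expect_scale expect_outer)

definition basis :: "bool \<Rightarrow> qvec" where
  "basis b = (\<lambda>c. if c = b then 1 else 0)"

lemma inner_basis [simp]: "inner (basis b) (basis b) = 1"
  by (simp add: inner_def basis_def sum_UNIV_bool)

definition vnorm :: "('a::finite \<Rightarrow> complex) \<Rightarrow> real" where
  "vnorm u = sqrt (\<Sum>i\<in>UNIV. (cmod (u i))\<^sup>2)"

lemma inner_self_vnorm: "inner u u = complex_of_real ((vnorm u)\<^sup>2)"
proof -
  have "inner u u = (\<Sum>i\<in>UNIV. complex_of_real ((cmod (u i))\<^sup>2))"
    unfolding inner_def complex_norm_square by (simp add: mult.commute)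
  then show ?thesis
    by (simp add: vnorm_def sum_nonneg del: of_real_power)
qed

lemma vnorm_pos: "u \<noteq> (\<lambda>_. 0) \<Longrightarrow> 0 < vnorm u"
proof -
  assume "u \<noteq> (\<lambda>_. 0)"
  then obtain i where "u i \<noteq> 0"
    by auto
  then have "0 < (\<Sum>i\<in>UNIV. (cmod (u i))\<^sup>2)"
    by (intro sum_pos2[of _ i]) auto
  then show ?thesis
    by (simp add: vnorm_def)
qed

lemma inner_self_normalize: "u \<noteq> (\<lambda>_. 0) \<Longrightarrow> inner (\<lambda>i. u i / vnorm u) (\<lambda>i. u i / vnorm u) = 1"
  using vnorm_pos[of u] inner_self_vnorm[of u]
  by (simp add: inner_def power2_eq_square field_simps flip: sum_divide_distrib)

definition adj_apply :: "('a::finite \<Rightarrow> 'a \<Rightarrow> complex) \<Rightarrow> ('a \<Rightarrow> complex) \<Rightarrow> ('a \<Rightarrow> complex)" where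
  "adj_apply M u = (\<lambda>j. \<Sum>i\<in>UNIV. cnj (M i j) * u i)"

lemma adj_apply_kron: "adj_apply (kron K L) (tens a b) = tens (adj_apply K a) (adj_apply L b)"
  by (auto simp: fun_eq_iff adj_apply_def kron_def tens_def sum_UNIV_bool_pair sum_UNIV_bool algebra_simps)

lemma conj_outer: "mmul (adj M) (mmul (outer u u) M) = outer (adj_apply M u) (adj_apply M u)"
proof (intro ext)
  fix i k
  have "mmul (adj M) (mmul (outer u u) M) i k = (\<Sum>p\<in>UNIV. \<Sum>q\<in>UNIV. (cnj (M p i) * u p) * (M q k * cnj (u q)))"
    unfolding mmul_def adj_def outer_def by (simp add: sum_distrib_left mult_ac)
  also have "\<dots> = outer (adj_apply M u) (adj_apply M u) i k"
    unfolding outer_def adj_apply_def by (simp only: cnj_sum complex_cnj_mult complex_cnj_cnj sum_product)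
  finally show "mmul (adj M) (mmul (outer u u) M) i k = outer (adj_apply M u) (adj_apply M u) i k" .
qed

lemma conj_add:
  "mmul (adj M) (mmul (\<lambda>i j. A i j + B i j) M) = (\<lambda>i j. mmul (adj M) (mmul A M) i j + mmul (adj M) (mmul B M) i j)"
  by (simp add: fun_eq_iff mmul_def algebra_simps sum.distrib sum_distrib_left)

lemma conj_sum:
  "mmul (adj M) (mmul (\<lambda>i j. \<Sum>l\<in>L. G l i j) M) = (\<lambda>i j. \<Sum>l\<in>L. mmul (adj M) (mmul (G l) M) i j)"
proof (intro ext)
  fix i j
  have "mmul (adj M) (mmul (\<lambda>i j. \<Sum>l\<in>L. G l i j) M) i j = (\<Sum>p\<in>UNIV. \<Sum>q\<in>UNIV. \<Sum>l\<in>L. adj M i p * (G l p q * M q j))"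
    by (simp add: mmul_def sum_distrib_left sum_distrib_right mult.assoc)
  also have "\<dots> = (\<Sum>l\<in>L. \<Sum>p\<in>UNIV. \<Sum>q\<in>UNIV. adj M i p * (G l p q * M q j))"
    by (subst sum.swap) (simp add: sum.swap[of _ UNIV L])
  also have "\<dots> = (\<Sum>l\<in>L. mmul (adj M) (mmul (G l) M) i j)"
    by (simp add: mmul_def sum_distrib_left)
  finally show "mmul (adj M) (mmul (\<lambda>i j. \<Sum>l\<in>L. G l i j) M) i j = (\<Sum>l\<in>L. mmul (adj M) (mmul (G l) M) i j)" .
qed

lemma conj_if_zop: "mmul (adj M) (mmul (if b then A else zop) M) = (if b then mmul (adj M) (mmul A M) else zop)"
  by (simp add: fun_eq_iff mmul_def zop_def)

lemma conj_kron:
  "mmul (adj (kron K L)) (mmul (kron A B) (kron K L)) = kron (mmul (adj K) (mmul A K)) (mmul (adj L) (mmul B L))"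
  by (simp add: fun_eq_iff mmul_def adj_def kron_def sum_UNIV_bool_pair sum_UNIV_bool algebra_simps)

lemma kron_idm: "kron idm idm = idm"
  by (auto simp: fun_eq_iff idm_def kron_def)

lemma mmul_idm_left: "mmul (idm :: qop) A = A"
  by (simp add: fun_eq_iff mmul_def idm_def sum_UNIV_bool)

lemma mmul_idm_right: "mmul A (idm :: qop) = A"
  by (simp add: fun_eq_iff mmul_def idm_def sum_UNIV_bool)

lemma adj_idm: "adj idm = idm"
  by (simp add: fun_eq_iff adj_def idm_def)

lemma kron_scaled_outer:
  "kron (\<lambda>i j. c * outer u u i j) (\<lambda>i j. d * outer v v i j) = (\<lambda>i j. (c * d) * outer (tens u v) (tens u v) i j)"
  by (simp add: fun_eq_iff kron_def outer_def tens_def algebra_simps)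

lemma psd_expect: "psd A \<Longrightarrow> Im (expect v A) = 0 \<and> 0 \<le> Re (expect v A)"
  by (simp add: psd_def)

lemma psd_zop: "psd zop"
  by (simp add: psd_def)

lemma psd_add: "psd A \<Longrightarrow> psd B \<Longrightarrow> psd (\<lambda>i j. A i j + B i j)"
  by (simp add: psd_def expect_add)

lemma psd_scaled_outer: "0 \<le> r \<Longrightarrow> psd (scaled_outer r u)"
  by (simp add: psd_def scaled_outer_def expect_scale expect_outer_norm flip: of_real_mult)

lemma psd_outer: "psd (outer u u)"
  by (simp add: psd_def expect_outer_norm)

lemma nonneg_quadratic_linear_coeff_zero:
  fixes b c :: real
  assumes "\<And>r. 0 \<le> r * b + r\<^sup>2 * c"
  shows "b = 0"
proof (rule ccontr)
  assume "b \<noteq> 0"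
  define e where "e = 1 / (\<bar>c\<bar> + 1)"
  have "e > 0" "e * c < 1"
    unfolding e_def by (auto simp: field_simps abs_if)
  have "0 \<le> (- e * b) * b + (- e * b)\<^sup>2 * c"
    by (rule assms)
  also have "\<dots> = e * b\<^sup>2 * (e * c - 1)"
    by (simp add: power2_eq_square algebra_simps)
  also have "\<dots> < 0"
    using \<open>e > 0\<close> \<open>e * c < 1\<close> \<open>b \<noteq> 0\<close> by (simp add: mult_pos_neg)
  finally show False by simp
qed

lemma psd_expect_zero_sesq:
  assumes "psd A" "expect u A = 0"
  shows "sesq u A v = 0" "sesq v A u = 0"
proof -
  define a b q where "a = sesq u A v" and "b = sesq v A u" and "q = expect v A"
  have nonneg: "Im (t * a + cnj t * b + t * cnj t * q) = 0 \<and> 0 \<le> Re (t * a + cnj t * b + t * cnj t * q)"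
    for t
    using psd_expect[OF assms(1), of "\<lambda>i. u i + t * v i"]
    by (simp add: expect_add_vector assms(2) a_def b_def q_def)
  have "Im q = 0"
    using psd_expect[OF assms(1)] by (simp add: q_def)
  then have "Im a + Im b = 0" "Re a - Re b = 0"
    using nonneg[of 1] nonneg[of \<i>] by simp_all
  moreover have "Re a + Re b = 0"
    by (rule nonneg_quadratic_linear_coeff_zero[of _ "Re q"])
      (use nonneg[of "complex_of_real r" for r] \<open>Im q = 0\<close> in \<open>simp add: power2_eq_square algebra_simps\<close>)
  moreover have "Im b - Im a = 0"
    by (rule nonneg_quadratic_linear_coeff_zero[of _ "Re q"])
      (use nonneg[of "\<i> * complex_of_real r" for r] \<open>Im q = 0\<close> in \<open>simp add: power2_eq_square algebra_simps\<close>)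
  ultimately have "a = 0" "b = 0"
    by (simp_all add: complex_eq_iff)
  then show "sesq u A v = 0" "sesq v A u = 0"
    by (simp_all add: a_def b_def)
qed

lemma psd_add_expect_zero:
  assumes "psd A" "psd B" "expect v (\<lambda>i j. A i j + B i j) = 0"
  shows "expect v A = 0" "expect v B = 0"
proof -
  have "Re (expect v A) + Re (expect v B) = 0" "Im (expect v A) = 0" "Im (expect v B) = 0"
    using arg_cong[OF assms(3), of Re] psd_expect[OF assms(1)] psd_expect[OF assms(2)]
    by (simp_all add: expect_add)
  moreover have "0 \<le> Re (expect v A)" "0 \<le> Re (expect v B)"
    using psd_expect[OF assms(1)] psd_expect[OF assms(2)] by simp_all
  ultimately show "expect v A = 0" "expect v B = 0"
    by (simp_all add: complex_eq_iff)
qed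

lemma povm_sum_expect:
  assumes "povm E"
  shows "(\<Sum>x\<in>UNIV. expect v (E x)) = expect v idm"
proof -
  have "(\<lambda>i j. \<Sum>x\<in>UNIV. E x i j) = idm"
    using assms unfolding povm_def by (intro ext) blast
  then show ?thesis
    by (metis expect_sum)
qed

lemma povm_expect_le_norm:
  assumes "povm E"
  shows "(\<Sum>x\<in>X. Re (expect v (E x))) \<le> Re (expect v idm)"
proof -
  have "(\<Sum>x\<in>X. Re (expect v (E x))) \<le> (\<Sum>x\<in>UNIV. Re (expect v (E x)))"
    using assms by (intro sum_mono2) (auto simp: povm_def psd_def)
  also have "\<dots> = Re (expect v idm)"
    using povm_sum_expect[OF assms] by (simp flip: Re_sum)
  finally show ?thesis .
qed

text \<open>If outcome \<open>x\<close> never fires on \<open>v\<close> and \<open>y\<close> never on \<open>u\<close>, both outcomes see \<open>u - v\<close>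
  exactly as they see \<open>u\<close> resp. \<open>v\<close>, so their detection rates are bounded by \<open>\<parallel>u - v\<parallel>\<^sup>2\<close>.\<close>
lemma povm_unambiguous_pair_bound:
  assumes "povm E" "x \<noteq> y" "expect v (E x) = 0" "expect u (E y) = 0"
  shows "Re (expect u (E x)) + Re (expect v (E y)) \<le> Re (expect (\<lambda>i. u i - v i) idm)"
proof -
  have psd: "psd (E z)" for z
    using assms(1) by (simp add: povm_def)
  have "expect (\<lambda>i. u i - v i) (E x) = expect u (E x)"
    using expect_add_vector[of u "-1" v] psd_expect_zero_sesq[OF psd assms(3)] assms(3) by simp
  moreover have "expect (\<lambda>i. u i - v i) (E y) = expect (\<lambda>i. v i - u i) (E y)"
    by (simp add: expect_def algebra_simps)
  moreover have "\<dots> = expect v (E y)"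
    using expect_add_vector[of v "-1" u] psd_expect_zero_sesq[OF psd assms(4)] assms(4) by simp
  ultimately show ?thesis
    using povm_expect_le_norm[OF assms(1), of "\<lambda>i. u i - v i" "{x, y}"] assms(2) by simp
qed

section \<open>Separable operators\<close>

text \<open>By \<open>sep_elem_iff_sep_cone\<close> these are
  exactly the separable operators, but the inductive form turns closure under sums and local
  conjugations into plain inductions.\<close>
inductive sep_cone :: "top \<Rightarrow> bool" where
  zero: "sep_cone zop"
| add_product: "sep_cone A \<Longrightarrow> sep_cone (\<lambda>i j. A i j + outer (tens a b) (tens a b) i j)"

lemma sep_cone_psd: "sep_cone A \<Longrightarrow> psd A"
proof (induction rule: sep_cone.induct)
  case zero
  then show ?case by (rule psd_zop)
next
  case (add_product A a b)
  then show ?case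
    using psd_add psd_outer by blast
qed

lemma sep_cone_add: "sep_cone B \<Longrightarrow> sep_cone A \<Longrightarrow> sep_cone (\<lambda>i j. A i j + B i j)"
proof (induction rule: sep_cone.induct)
  case zero
  then show ?case by (simp add: zop_def)
next
  case (add_product B a b)
  then show ?case
    using sep_cone.add_product[of "\<lambda>i j. A i j + B i j" a b] by (simp add: add.assoc)
qed

lemma sep_cone_sum:
  assumes "finite K" "\<And>k. k \<in> K \<Longrightarrow> sep_cone (F k)"
  shows "sep_cone (\<lambda>i j. \<Sum>k\<in>K. F k i j)"
  using assms
proof (induction K rule: finite_induct)
  case empty
  then show ?case using sep_cone.zero by (simp add: zop_def)
next
  case (insert k K)
  then show ?case
    using sep_cone_add[of "F k" "\<lambda>i j. \<Sum>k\<in>K. F k i j"] by (simp add: add.commute)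
qed

lemma sep_cone_scaled_product:
  assumes "0 \<le> r"
  shows "sep_cone (\<lambda>i j. complex_of_real r * outer (tens a b) (tens a b) i j)"
proof -
  have "(\<lambda>i j. complex_of_real r * outer (tens a b) (tens a b) i j)
      = (\<lambda>i j. zop i j + outer (tens (\<lambda>p. complex_of_real (sqrt r) * a p) b)
                              (tens (\<lambda>p. complex_of_real (sqrt r) * a p) b) i j)"
    using assms by (simp add: fun_eq_iff zop_def outer_def tens_def mult_ac flip: of_real_mult)
  then show ?thesis
    by (simp add: sep_cone.intros)
qed

lemma sep_cone_idm: "sep_cone idm"
proof -
  have "sep_cone (\<lambda>i j. \<Sum>p\<in>UNIV. outer (tens (basis (fst p)) (basis (snd p))) (tens (basis (fst p)) (basis (snd p))) i j)"
    using sep_cone_scaled_product[of 1] by (intro sep_cone_sum) simp_all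
  moreover have "(\<lambda>i j. \<Sum>p\<in>UNIV. outer (tens (basis (fst p)) (basis (snd p))) (tens (basis (fst p)) (basis (snd p))) i j) = idm"
    by (auto simp: fun_eq_iff idm_def outer_def tens_def basis_def sum_UNIV_bool_pair)
  ultimately show ?thesis by simp
qed

lemma sep_cone_conj_local: "sep_cone A \<Longrightarrow> sep_cone (mmul (adj (kron K L)) (mmul A (kron K L)))"
proof (induction rule: sep_cone.induct)
  case zero
  have "mmul (adj M) (mmul zop M) = zop" for M :: top
    by (simp add: fun_eq_iff mmul_def zop_def)
  then show ?case by (simp add: sep_cone.zero)
next
  case (add_product A a b)
  then show ?case
    by (simp add: conj_add conj_outer adj_apply_kron sep_cone.add_product)
qed

lemma locc_sep_cone: "locc E \<Longrightarrow> sep_cone (E x)"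
proof (induction arbitrary: x rule: locc.induct)
  case (stop x0)
  then show ?case by (simp add: sep_cone_idm sep_cone.zero)
next
  case (stepA K m F)
  then show ?case by (intro sep_cone_sum) (simp_all add: sep_cone_conj_local)
next
  case (stepB K m F)
  then show ?case by (intro sep_cone_sum) (simp_all add: sep_cone_conj_local)
qed

lemma product_outer_normalize:
  "\<exists>r a' b'. 0 \<le> r \<and> inner a' a' = 1 \<and> inner b' b' = 1 \<and>
     outer (tens a b) (tens a b) = (\<lambda>i j. complex_of_real r * outer (tens a' b') (tens a' b') i j)"
proof (cases "a = (\<lambda>_. 0) \<or> b = (\<lambda>_. 0)")
  case True
  then show ?thesis
    by (intro exI[of _ 0] exI[of _ "basis False"]) (auto simp: fun_eq_iff outer_def tens_def)
next
  case False
  then have "0 < vnorm a" "0 < vnorm b"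
    by (simp_all add: vnorm_pos)
  then have "outer (tens a b) (tens a b) = (\<lambda>i j. complex_of_real ((vnorm a * vnorm b)\<^sup>2) *
      outer (tens (\<lambda>i. a i / vnorm a) (\<lambda>i. b i / vnorm b)) (tens (\<lambda>i. a i / vnorm a) (\<lambda>i. b i / vnorm b)) i j)"
    by (simp add: fun_eq_iff outer_def tens_def power2_eq_square field_simps)
  then show ?thesis
    using False inner_self_normalize[of a] inner_self_normalize[of b]
    by (intro exI[of _ "(vnorm a * vnorm b)\<^sup>2"] exI[of _ "\<lambda>i. a i / vnorm a"] exI[of _ "\<lambda>i. b i / vnorm b"]) simp
qed

lemma sep_elem_imp_sep_cone: "sep_elem E \<Longrightarrow> sep_cone E"
  unfolding sep_elem_def by (auto intro!: sep_cone_sum sep_cone_scaled_product)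

lemma sep_cone_imp_sep_elem: "sep_cone A \<Longrightarrow> sep_elem A"
proof (induction rule: sep_cone.induct)
  case zero
  show ?case
    unfolding sep_elem_def by (intro exI[of _ 0]) (simp add: zop_def)
next
  case (add_product A a b)
  obtain n :: nat and c \<alpha> \<beta> where coeffs: "\<forall>k<n. 0 \<le> c k \<and> inner (\<alpha> k) (\<alpha> k) = 1 \<and> inner (\<beta> k) (\<beta> k) = 1"
    and A: "A = (\<lambda>i j. \<Sum>k<n. complex_of_real (c k) * outer (tens (\<alpha> k) (\<beta> k)) (tens (\<alpha> k) (\<beta> k)) i j)"
    using add_product.IH unfolding sep_elem_def by (elim exE conjE) blast
  obtain r a' b' where new: "0 \<le> r" "inner a' a' = 1" "inner b' b' = 1"
    and ab: "outer (tens a b) (tens a b) = (\<lambda>i j. complex_of_real r * outer (tens a' b') (tens a' b') i j)"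
    using product_outer_normalize by blast
  define c' \<alpha>' \<beta>' where "c' = c(n := r)" and "\<alpha>' = \<alpha>(n := a')" and "\<beta>' = \<beta>(n := b')"
  have "\<forall>k<Suc n. 0 \<le> c' k \<and> inner (\<alpha>' k) (\<alpha>' k) = 1 \<and> inner (\<beta>' k) (\<beta>' k) = 1"
    using coeffs new by (auto simp: c'_def \<alpha>'_def \<beta>'_def less_Suc_eq)
  moreover have "(\<lambda>i j. A i j + outer (tens a b) (tens a b) i j) =
      (\<lambda>i j. \<Sum>k<Suc n. complex_of_real (c' k) * outer (tens (\<alpha>' k) (\<beta>' k)) (tens (\<alpha>' k) (\<beta>' k)) i j)"
    unfolding A ab c'_def \<alpha>'_def \<beta>'_def by (simp add: fun_eq_iff)
  ultimately show ?case
    unfolding sep_elem_def by blast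
qed

lemma sep_elem_iff_sep_cone: "sep_elem A \<longleftrightarrow> sep_cone A"
  using sep_elem_imp_sep_cone sep_cone_imp_sep_elem by blast

text \<open>Zero expectations force every product vector of the decomposition to be orthogonal to \<open>U\<close>,
  so the bound needs to be checked on such product vectors only.\<close>
lemma sep_cone_expect_bound:
  assumes "sep_cone A" "\<And>u. u \<in> U \<Longrightarrow> expect u A = 0"
    and product_bound: "\<And>a b. (\<And>u. u \<in> U \<Longrightarrow> inner u (tens a b) = 0) \<Longrightarrow>
      (cmod (inner x (tens a b)))\<^sup>2 \<le> c * (cmod (inner y (tens a b)))\<^sup>2"
  shows "Re (expect x A) \<le> c * Re (expect y A)"
  using assms(1,2)
proof (induction rule: sep_cone.induct)
  case zero
  then show ?case by simp
next
  case (add_product A a b)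
  have psd: "psd A" "psd (outer (tens a b) (tens a b))"
    using sep_cone_psd[OF add_product.hyps] psd_outer by simp_all
  have "expect u A = 0" "inner u (tens a b) = 0" if "u \<in> U" for u
    using psd_add_expect_zero[OF psd] add_product.prems that by (simp_all add: expect_outer_eq_0_iff)
  then have "Re (expect x A) \<le> c * Re (expect y A)"
    and "(cmod (inner x (tens a b)))\<^sup>2 \<le> c * (cmod (inner y (tens a b)))\<^sup>2"
    using add_product.IH product_bound by simp_all
  then show ?case
    by (simp add: expect_add expect_outer_norm distrib_left)
qed

section \<open>The double trine ensemble\<close>

definition sqrt3 :: complex where
  "sqrt3 = complex_of_real (sqrt 3)"

lemma sqrt3_square [simp]: "sqrt3 * sqrt3 = 3" "sqrt3 * (sqrt3 * z) = 3 * z"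
  by (simp_all add: sqrt3_def mult.assoc [symmetric] flip: of_real_mult)

lemma cnj_sqrt3 [simp]: "cnj sqrt3 = sqrt3"
  by (simp add: sqrt3_def)

text \<open>Numeral \<open>1 :: nat\<close> is simplified to \<open>Suc 0\<close>, so rewrite rules are stated with the latter.\<close>
lemma s_apply [simp]:
  "s 0 False = 1" "s 0 True = 0"
  "s (Suc 0) False = - 1/2" "s (Suc 0) True = - sqrt3 / 2"
  "s 2 False = - 1/2" "s 2 True = sqrt3 / 2"
  by (simp_all add: s_def sqrt3_def)

lemma inner_s:
  "inner (s 0) a = a False"
  "inner (s (Suc 0)) a = - a False / 2 - sqrt3 * a True / 2"
  "inner (s 2) a = - a False / 2 + sqrt3 * a True / 2"
  by (simp_all add: inner_def sum_UNIV_bool)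

lemma psi_apply [simp]: "psi i (p, q) = s i p * s i q"
  by (simp add: psi_def tens_def)

lemma inner_psi_tens: "inner (psi i) (tens a b) = inner (s i) a * inner (s i) b"
  by (simp add: psi_def inner_tens)

lemma less_3_cases: "(i::nat) < 3 \<longleftrightarrow> i = 0 \<or> i = 1 \<or> i = 2"
  by auto

lemma lab_simps [simp]: "lab 0 = R0" "lab (Suc 0) = R1" "lab 2 = R2"
  by (simp_all add: lab_def)

lemma ud_povm_iff:
  "ud_povm E \<longleftrightarrow> povm E \<and>
     expect (psi 1) (E R0) = 0 \<and> expect (psi 2) (E R0) = 0 \<and>
     expect (psi 0) (E R1) = 0 \<and> expect (psi 2) (E R1) = 0 \<and>
     expect (psi 0) (E R2) = 0 \<and> expect (psi 1) (E R2) = 0"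
  unfolding ud_povm_def less_3_cases by auto

lemma succ_prob_eq:
  "succ_prob E = (Re (expect (psi 0) (E R0)) + Re (expect (psi 1) (E R1)) + Re (expect (psi 2) (E R2))) / 3"
  by (simp add: succ_prob_def sum_lessThan_3)

definition vec4 :: "complex \<Rightarrow> complex \<Rightarrow> complex \<Rightarrow> complex \<Rightarrow> tvec" where
  "vec4 a b c d = (\<lambda>(p, q). if p then (if q then d else c) else (if q then b else a))"

lemma vec4_apply [simp]:
  "vec4 a b c d (False, False) = a" "vec4 a b c d (False, True) = b"
  "vec4 a b c d (True, False) = c" "vec4 a b c d (True, True) = d"
  by (simp_all add: vec4_def)

definition singlet :: tvec where
  "singlet = vec4 0 1 (-1) 0"

lemma inner_singlet_tens: "inner singlet (tens a b) = a False * b True - a True * b False"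
  by (simp add: inner_def sum_UNIV_bool_pair singlet_def tens_def)

section \<open>Arbitrary measurements\<close>

lemma norm_psi_differences:
  "Re (expect (\<lambda>x. psi 0 x - psi (Suc 0) x) idm) = 3/2"
  "Re (expect (\<lambda>x. psi 0 x - psi 2 x) idm) = 3/2"
  "Re (expect (\<lambda>x. psi (Suc 0) x - psi 2 x) idm) = 3/2"
  by (simp_all add: expect_def idm_def sum_UNIV_bool_pair if_distrib cong: if_cong)

lemma ud_succ_prob_le: "ud_povm E \<Longrightarrow> succ_prob E \<le> 3/4"
  using povm_unambiguous_pair_bound[of E R0 R1 "psi 1" "psi 0"]
    povm_unambiguous_pair_bound[of E R0 R2 "psi 2" "psi 0"]
    povm_unambiguous_pair_bound[of E R1 R2 "psi 2" "psi 1"]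
  by (simp add: ud_povm_iff succ_prob_eq norm_psi_differences)

text \<open>\<open>opt_vec i\<close> is orthogonal to the two states \<open>psi j\<close> with \<open>j \<noteq> i\<close>.\<close>
definition opt_vec :: "nat \<Rightarrow> tvec" where
  "opt_vec i = (if i = 0 then vec4 3 0 0 (-1) else if i = 1 then vec4 0 sqrt3 sqrt3 2 else vec4 0 (- sqrt3) (- sqrt3) 2)"

definition opt_povm :: "res \<Rightarrow> top" where
  "opt_povm x = (case x of
      R0 \<Rightarrow> scaled_outer (1/12) (opt_vec 0)
    | R1 \<Rightarrow> scaled_outer (1/12) (opt_vec 1)
    | R2 \<Rightarrow> scaled_outer (1/12) (opt_vec 2)
    | RQ \<Rightarrow> (\<lambda>i j. scaled_outer (1/4) (vec4 1 0 0 1) i j + scaled_outer (1/2) singlet i j))"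

lemma opt_povm_povm: "povm opt_povm"
  unfolding povm_def
proof (intro conjI allI)
  show "psd (opt_povm x)" for x
    by (cases x) (simp_all add: opt_povm_def psd_scaled_outer psd_add)
  show "(\<Sum>x\<in>UNIV. opt_povm x i j) = idm i j" for i j
    by (cases i; cases j; auto simp: sum_UNIV_res opt_povm_def scaled_outer_def outer_def opt_vec_def singlet_def idm_def vec4_def)
qed

lemma opt_povm_ud: "ud_povm opt_povm"
  by (simp add: ud_povm_iff opt_povm_povm opt_povm_def expect_scaled_outer inner_def sum_UNIV_bool_pair opt_vec_def algebra_simps)

lemma opt_povm_succ_prob: "succ_prob opt_povm = 3/4"
  by (simp add: succ_prob_eq opt_povm_def expect_scaled_outer inner_def sum_UNIV_bool_pair opt_vec_def algebra_simps)

section \<open>Separable measurements\<close>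

lemma cmod_le_of_sqrt3_multiple:
  assumes "2 * z = sqrt3 * d \<or> 2 * z = - sqrt3 * d \<or> z = 0"
  shows "(cmod z)\<^sup>2 \<le> 3/4 * (cmod d)\<^sup>2"
proof -
  have "2 * cmod z = sqrt 3 * cmod d \<or> z = 0"
    using assms by (auto simp: norm_mult sqrt3_def dest: arg_cong[of _ _ cmod])
  then show ?thesis
    by (auto simp: power_mult_distrib dest: arg_cong[of _ _ "\<lambda>r. r\<^sup>2"])
qed

lemma trine_zero_iff:
  "- x / 2 - sqrt3 * y / 2 = 0 \<longleftrightarrow> x = - sqrt3 * y"
  "- x / 2 + sqrt3 * y / 2 = 0 \<longleftrightarrow> x = sqrt3 * y"
  by (auto simp: field_simps minus_equation_iff[of x])

text \<open>The three cases \<open>i = 0, 1, 2\<close> of \<open>product_overlap_bound\<close>, in the coordinates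
  \<open>a = (x, y)\<close> and \<open>b = (u, v)\<close>.\<close>
lemma trine_overlap_0:
  fixes x y u v :: complex
  assumes "(- x / 2 - sqrt3 * y / 2) * (- u / 2 - sqrt3 * v / 2) = 0"
    "(- x / 2 + sqrt3 * y / 2) * (- u / 2 + sqrt3 * v / 2) = 0"
  shows "2 * (x * u) = sqrt3 * (x * v - y * u) \<or> 2 * (x * u) = - sqrt3 * (x * v - y * u) \<or> x * u = 0"
  using assms unfolding mult_eq_0_iff trine_zero_iff by (auto simp: algebra_simps)

lemma trine_overlap_1:
  fixes x y u v :: complex
  assumes "x * u = 0" "(- x / 2 + sqrt3 * y / 2) * (- u / 2 + sqrt3 * v / 2) = 0"
  shows "2 * ((- x / 2 - sqrt3 * y / 2) * (- u / 2 - sqrt3 * v / 2)) = sqrt3 * (x * v - y * u) \<or>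
    2 * ((- x / 2 - sqrt3 * y / 2) * (- u / 2 - sqrt3 * v / 2)) = - sqrt3 * (x * v - y * u) \<or>
    (- x / 2 - sqrt3 * y / 2) * (- u / 2 - sqrt3 * v / 2) = 0"
  using assms unfolding mult_eq_0_iff trine_zero_iff by (auto simp: algebra_simps)

lemma trine_overlap_2:
  fixes x y u v :: complex
  assumes "x * u = 0" "(- x / 2 - sqrt3 * y / 2) * (- u / 2 - sqrt3 * v / 2) = 0"
  shows "2 * ((- x / 2 + sqrt3 * y / 2) * (- u / 2 + sqrt3 * v / 2)) = sqrt3 * (x * v - y * u) \<or>
    2 * ((- x / 2 + sqrt3 * y / 2) * (- u / 2 + sqrt3 * v / 2)) = - sqrt3 * (x * v - y * u) \<or>
    (- x / 2 + sqrt3 * y / 2) * (- u / 2 + sqrt3 * v / 2) = 0"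
  using assms unfolding mult_eq_0_iff trine_zero_iff by (auto simp: algebra_simps)

lemma product_overlap_bound:
  assumes "i < 3" "\<And>j. j < 3 \<Longrightarrow> j \<noteq> i \<Longrightarrow> inner (psi j) (tens a b) = 0"
  shows "(cmod (inner (psi i) (tens a b)))\<^sup>2 \<le> 3/4 * (cmod (inner singlet (tens a b)))\<^sup>2"
proof (rule cmod_le_of_sqrt3_multiple)
  have orth: "inner (psi 0) (tens a b) = 0 \<or> i = 0" "inner (psi (Suc 0)) (tens a b) = 0 \<or> i = 1"
    "inner (psi 2) (tens a b) = 0 \<or> i = 2"
    using assms(2)[of 0] assms(2)[of 1] assms(2)[of 2] by auto
  consider "i = 0" | "i = 1" | "i = 2"
    using assms(1) by linarith
  then show "2 * inner (psi i) (tens a b) = sqrt3 * inner singlet (tens a b) \<or>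
      2 * inner (psi i) (tens a b) = - sqrt3 * inner singlet (tens a b) \<or> inner (psi i) (tens a b) = 0"
  proof cases
    case 1
    then show ?thesis
      using orth trine_overlap_0[of "a False" "a True" "b False" "b True"]
      by (simp add: inner_psi_tens inner_s inner_singlet_tens)
  next
    case 2
    then show ?thesis
      using orth trine_overlap_1[of "a False" "b False" "a True" "b True"]
      by (simp add: inner_psi_tens inner_s inner_singlet_tens)
  next
    case 3
    then show ?thesis
      using orth trine_overlap_2[of "a False" "b False" "a True" "b True"]
      by (simp add: inner_psi_tens inner_s inner_singlet_tens)
  qed
qed

lemma norm_singlet: "Re (expect singlet idm) = 2"
  by (simp add: expect_def idm_def sum_UNIV_bool_pair singlet_def)

lemma sep_ud_succ_prob_le:
  assumes "ud_povm E" "\<And>x. sep_cone (E x)"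
  shows "succ_prob E \<le> 1/2"
proof -
  have "povm E"
    using assms(1) by (simp add: ud_povm_def)
  have detect: "Re (expect (psi i) (E (lab i))) \<le> 3/4 * Re (expect singlet (E (lab i)))" if "i < 3" for i
  proof (rule sep_cone_expect_bound[where U = "psi ` ({..<3} - {i})"])
    show "expect u (E (lab i)) = 0" if "u \<in> psi ` ({..<3} - {i})" for u
      using assms(1) that \<open>i < 3\<close> by (auto simp: ud_povm_def)
    show "(cmod (inner (psi i) (tens a b)))\<^sup>2 \<le> 3/4 * (cmod (inner singlet (tens a b)))\<^sup>2"
      if "\<And>u. u \<in> psi ` ({..<3} - {i}) \<Longrightarrow> inner u (tens a b) = 0" for a b
      using product_overlap_bound[OF \<open>i < 3\<close>] that by blast
  qed (rule assms(2))
  have "Re (expect singlet (E R0)) + Re (expect singlet (E R1)) + Re (expect singlet (E R2)) \<le> 2"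
    using povm_expect_le_norm[OF \<open>povm E\<close>, of singlet "{R0, R1, R2}"] by (simp add: norm_singlet)
  then show ?thesis
    using detect[of 0] detect[of 1] detect[of 2] by (simp add: succ_prob_eq)
qed

section \<open>An optimal LOCC protocol\<close>

text \<open>\<open>trine k\<close> is orthogonal to \<open>s k\<close>, and \<open>{2/3 |trine k\<rangle>\<langle>trine k|}\<close> is a qubit POVM.\<close>
definition trine :: "nat \<Rightarrow> qvec" where
  "trine k = (if k = 0 then (\<lambda>b. if b then 1 else 0)
              else if k = 1 then (\<lambda>b. if b then - 1/2 else sqrt3 / 2)
              else (\<lambda>b. if b then 1/2 else sqrt3 / 2))"

definition trine_kraus :: "nat \<Rightarrow> qop" where
  "trine_kraus k = (\<lambda>r c. if r then 0 else complex_of_real (sqrt (2/3)) * cnj (trine k c))"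

text \<open>If Alice's and Bob's trine outcomes differ, both \<open>psi k\<close> and \<open>psi l\<close> are excluded.\<close>
definition trine_outcome :: "nat \<Rightarrow> nat \<Rightarrow> res" where
  "trine_outcome k l = (if k = l then RQ else lab (3 - k - l))"

definition trine_announce :: "nat \<Rightarrow> nat \<Rightarrow> res \<Rightarrow> top" where
  "trine_announce k l = (\<lambda>x. if x = trine_outcome k l then idm else zop)"

definition trine_bob_step :: "nat \<Rightarrow> res \<Rightarrow> top" where
  "trine_bob_step k = (\<lambda>x i j. \<Sum>l<3. mmul (adj (kron idm (trine_kraus l))) (mmul (trine_announce k l x) (kron idm (trine_kraus l))) i j)"

definition trine_locc :: "res \<Rightarrow> top" where
  "trine_locc = (\<lambda>x i j. \<Sum>k<3. mmul (adj (kron (trine_kraus k) idm)) (mmul (trine_bob_step k x) (kron (trine_kraus k) idm)) i j)"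

lemma trine_kraus_square: "mmul (adj (trine_kraus k)) (trine_kraus k) = (\<lambda>i j. 2/3 * outer (trine k) (trine k) i j)"
proof -
  have "cnj (complex_of_real (sqrt (2/3))) * complex_of_real (sqrt (2/3)) = 2/3"
    by (simp flip: of_real_mult)
  then show ?thesis
    by (simp add: fun_eq_iff mmul_def adj_def trine_kraus_def outer_def sum_UNIV_bool mult_ac)
qed

lemma trine_kraus_complete: "\<forall>i j. (\<Sum>k<3. mmul (adj (trine_kraus k)) (trine_kraus k) i j) = idm i j"
proof (intro allI)
  fix i j :: bool
  show "(\<Sum>k<3. mmul (adj (trine_kraus k)) (trine_kraus k) i j) = idm i j"
    unfolding sum_lessThan_3 trine_kraus_square outer_def
    by (cases i; cases j) (simp_all add: trine_def idm_def)
qed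

lemma trine_locc_locc: "locc trine_locc"
  unfolding trine_locc_def
proof (rule locc.stepA[OF trine_kraus_complete], intro allI impI)
  show "locc (trine_bob_step k)" for k
    unfolding trine_bob_step_def trine_announce_def by (rule locc.stepB[OF trine_kraus_complete]) (simp add: locc.stop)
qed

lemma trine_locc_eq:
  "trine_locc x = (\<lambda>i j. \<Sum>k<3. \<Sum>l<3.
     (if x = trine_outcome k l then 4/9 else 0) * outer (tens (trine k) (trine l)) (tens (trine k) (trine l)) i j)"
proof -
  have bob: "trine_bob_step k x = (\<lambda>i j. \<Sum>l<3.
      (if x = trine_outcome k l then kron idm (\<lambda>i j. 2/3 * outer (trine l) (trine l) i j) else zop) i j)" for k
    unfolding trine_bob_step_def trine_announce_def conj_if_zop kron_idm[symmetric] conj_kron adj_idm mmul_idm_left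
      trine_kraus_square by simp
  show ?thesis
    unfolding trine_locc_def bob conj_sum conj_if_zop conj_kron adj_idm mmul_idm_left mmul_idm_right trine_kraus_square
      kron_idm[symmetric] kron_scaled_outer
    by (intro ext sum.cong refl) (simp add: zop_def)
qed

lemma expect_trine_locc:
  "expect v (trine_locc x) = (\<Sum>k<3. \<Sum>l<3.
     (if x = trine_outcome k l then 4/9 else 0) * (inner v (tens (trine k) (trine l)) * cnj (inner v (tens (trine k) (trine l)))))"
  by (simp add: trine_locc_eq expect_sum expect_scale expect_outer)

lemma trine_locc_povm: "povm trine_locc"
  unfolding povm_def
proof (intro conjI allI)
  show "psd (trine_locc x)" for x
    using locc_sep_cone[OF trine_locc_locc] sep_cone_psd by blast
  show "(\<Sum>x\<in>UNIV. trine_locc x i j) = idm i j" for i j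
    unfolding trine_locc_eq sum_UNIV_res sum_lessThan_3
    by (cases i; cases j) (simp_all add: trine_outcome_def outer_def tens_def trine_def idm_def)
qed

lemma inner_s_trine:
  "inner (s 0) (trine 0) = 0" "inner (s 0) (trine (Suc 0)) = sqrt3 / 2" "inner (s 0) (trine 2) = sqrt3 / 2"
  "inner (s (Suc 0)) (trine 0) = - sqrt3 / 2" "inner (s (Suc 0)) (trine (Suc 0)) = 0" "inner (s (Suc 0)) (trine 2) = - sqrt3 / 2"
  "inner (s 2) (trine 0) = sqrt3 / 2" "inner (s 2) (trine (Suc 0)) = - sqrt3 / 2" "inner (s 2) (trine 2) = 0"
  by (simp_all add: inner_s trine_def field_simps)

lemma trine_locc_ud: "ud_povm trine_locc"
  by (simp add: ud_povm_iff trine_locc_povm expect_trine_locc sum_lessThan_3 trine_outcome_def lab_def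
      inner_psi_tens inner_s_trine)

lemma trine_locc_succ_prob: "succ_prob trine_locc = 1/2"
  by (simp add: succ_prob_eq expect_trine_locc sum_lessThan_3 trine_outcome_def lab_def
      inner_psi_tens inner_s_trine algebra_simps)

theorem mainTheorem17:
  shows "((\<exists>E. ud_povm E \<and> succ_prob E = 3/4) \<and>
          (\<forall>E. ud_povm E \<longrightarrow> succ_prob E \<le> 3/4))
       \<and> ((\<exists>E. ud_povm E \<and> sep_povm E \<and> succ_prob E = 1/2) \<and>
          (\<forall>E. ud_povm E \<and> sep_povm E \<longrightarrow> succ_prob E \<le> 1/2))
       \<and> ((\<exists>E. ud_povm E \<and> locc_povm E \<and> succ_prob E = 1/2) \<and>
          (\<forall>E. ud_povm E \<and> locc_povm E \<longrightarrow> succ_prob E \<le> 1/2))"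
proof -
  have "sep_povm trine_locc" "locc_povm trine_locc"
    using trine_locc_povm locc_sep_cone[OF trine_locc_locc] trine_locc_locc
    by (simp_all add: sep_povm_def locc_povm_def sep_elem_iff_sep_cone)
  moreover have "sep_cone (E x)" if "sep_povm E \<or> locc_povm E" for E :: "res \<Rightarrow> top" and x
    using that locc_sep_cone by (auto simp: sep_povm_def locc_povm_def sep_elem_iff_sep_cone)
  then have "succ_prob E \<le> 1/2" if "ud_povm E" "sep_povm E \<or> locc_povm E" for E
    using sep_ud_succ_prob_le that by blast
  ultimately show ?thesis
    using opt_povm_ud opt_povm_succ_prob ud_succ_prob_le trine_locc_ud trine_locc_succ_prob by blast
qed

end
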